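(* Let $A\in\mathbb{C}^{n\times m}$, $\alpha_1\ge 1/\sqrt{n}$, $\alpha_2\ge 1/\sqrt{m}$, and let $$U=\Big\{u\in\mathbb{C}^n:\|u\|\le\alpha_1,\ \operatorname{Re}(u)\ge0,\ \textstyle\sum_{i=1}^n u_i=1\Big\},\qquad V=\Big\{v\in\mathbb{C}^m:\|v\|\le\alpha_2,\ \operatorname{Re}(v)\ge0,\ \textstyle\sum_{i=1}^m v_i=1\Big\}.$$ Then there exists $(u^\star,v^\star,\varrho)\in U\times V\times\mathbb{R}$ such that $$\operatorname{Re}(u^{\star H}Av)\ge\varrho\ \ \forall v\in V\qquad\text{and}\qquad \operatorname{Re}(u^HAv^\star)\le\varrho\ \ \forall u\in U.$$ The real number $\varrho$ is uniquely determined and $$\varrho=\max_{u\in U}\min_{v\in V}\operatorname{Re}(u^HAv)=\min_{v\in V}\max_{u\in U}\operatorname{Re}(u^HAv).$$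
   Context: $\|\cdot\|$ is the Euclidean norm on $\mathbb{C}^k$, $u^H$ denotes the conjugate transpose, $\operatorname{Re}(u)\ge0$ is meant componentwise, and $\sum_i u_i=1$ is an equality of complex numbers (so the real parts sum to $1$ and the imaginary parts sum to $0$). *)

theory Defs
  imports "HOL-Analysis.Analysis"
begin

definition bilin :: "complex ^ 'm ^ 'n \<Rightarrow> complex ^ 'n \<Rightarrow> complex ^ 'm \<Rightarrow> complex" where
  "bilin A u v = (\<Sum>i\<in>UNIV. \<Sum>j\<in>UNIV. cnj (u $ i) * (A $ i $ j) * v $ j)"

definition cset :: "real \<Rightarrow> (complex ^ 'n) set" where
  "cset \<alpha> = {u. norm u \<le> \<alpha> \<and> (\<forall>i. Re (u $ i) \<ge> 0) \<and> (\<Sum>i\<in>UNIV. u $ i) = 1}"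

end

theory Submission imports Defs begin

text \<open>A saddle point of \<open>Re (u\<^sup>H A v)\<close> on \<open>U \<times> V\<close> is obtained as a fixed point of the
  projected gradient step \<open>(u, v) \<mapsto> P\<^sub>U\<^sub>\<times>\<^sub>V (u + A v, v - A\<^sup>H u)\<close>, which exists by Brouwer's
  theorem because \<open>U \<times> V\<close> is compact, convex and nonempty.  The variational inequality
  characterising the projection says exactly that the fixed point is a saddle point.
  A saddle value is attained as an inner extremum at the saddle point and bounds every other
  one, so it equals both max-min and min-max; any two saddle values coincide for the same
  reason.\<close>

lemma bilinear_saddle_point_exists:
  fixes f :: "'a::euclidean_space \<Rightarrow> 'b::euclidean_space \<Rightarrow> real"
    and G :: "'b \<Rightarrow> 'a" and H :: "'a \<Rightarrow> 'b"
  assumes U: "compact U" "convex U" "U \<noteq> {}"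
    and V: "compact V" "convex V" "V \<noteq> {}"
    and "continuous_on V G" "continuous_on U H"
    and f_G: "\<And>u v. f u v = inner u (G v)"
    and f_H: "\<And>u v. f u v = inner (H u) v"
  obtains us vs where "us \<in> U" "vs \<in> V"
    "\<forall>v\<in>V. f us vs \<le> f us v" "\<forall>u\<in>U. f u vs \<le> f us vs"
proof -
  let ?K = "U \<times> V"
  have K: "compact ?K" "convex ?K" "?K \<noteq> {}" "closed ?K"
    using U V by (auto intro: compact_Times convex_Times compact_imp_closed)
  define F where "F p = (G (snd p), - H (fst p))" for p
  define T where "T p = closest_point ?K (p + F p)" for p
  have "continuous_on ?K (\<lambda>p. G (snd p))" "continuous_on ?K (\<lambda>p. H (fst p))"
    by (auto intro: continuous_on_compose2[OF assms(7) continuous_on_snd]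
                    continuous_on_compose2[OF assms(8) continuous_on_fst])
  then have "continuous_on ?K (\<lambda>p. p + F p)"
    unfolding F_def by (intro continuous_intros)
  then have "continuous_on ?K T"
    unfolding T_def
    by (rule continuous_on_compose2[OF continuous_on_closest_point[OF K(2,4,3), of UNIV]]) simp_all
  moreover have "T \<in> ?K \<rightarrow> ?K"
    unfolding T_def using closest_point_in_set[OF K(4,3)] by blast
  ultimately obtain p where p: "p \<in> ?K" "T p = p"
    using brouwer[OF K(1-3)] by blast
  obtain us vs where p_eq: "p = (us, vs)" and "us \<in> U" "vs \<in> V"
    using p(1) by blast
  have projection: "inner (F p) (q - p) \<le> 0" if "q \<in> ?K" for q
    using closest_point_dot[OF K(2,4) that, of "p + F p"] p(2) unfolding T_def by simp
  show thesis
  proof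
    show "\<forall>v\<in>V. f us vs \<le> f us v"
      using projection[of "(us, _)"] \<open>us \<in> U\<close>
      by (auto simp: F_def p_eq f_H inner_diff_right)
    show "\<forall>u\<in>U. f u vs \<le> f us vs"
      using projection[of "(_, vs)"] \<open>vs \<in> V\<close>
      by (force simp: F_def p_eq f_G inner_diff_right inner_commute)
  qed fact+
qed

lemma saddle_value_unique:
  fixes f :: "'a \<Rightarrow> 'b \<Rightarrow> real"
  assumes "us \<in> U" "vs \<in> V" "\<forall>v\<in>V. \<rho> \<le> f us v" "\<forall>u\<in>U. f u vs \<le> \<rho>"
    and "us' \<in> U" "vs' \<in> V" "\<forall>v\<in>V. \<rho>' \<le> f us' v" "\<forall>u\<in>U. f u vs' \<le> \<rho>'"
  shows "\<rho>' = \<rho>"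
proof -
  have "\<rho>' \<le> f us' vs" "f us' vs \<le> \<rho>" "\<rho> \<le> f us vs'" "f us vs' \<le> \<rho>'"
    using assms by blast+
  then show ?thesis by linarith
qed

lemma saddle_INF_eq:
  fixes f :: "'a \<Rightarrow> 'b \<Rightarrow> real"
  assumes "us \<in> U" "vs \<in> V" "\<forall>v\<in>V. \<rho> \<le> f us v" "\<forall>u\<in>U. f u vs \<le> \<rho>"
  shows "(INF v\<in>V. f us v) = \<rho>"
proof -
  have "f us vs = \<rho>"
    using assms by (meson order.antisym)
  then show ?thesis
    using assms by (intro cInf_eq_minimum) auto
qed

lemma saddle_SUP_eq:
  fixes f :: "'a \<Rightarrow> 'b \<Rightarrow> real"
  assumes "us \<in> U" "vs \<in> V" "\<forall>v\<in>V. \<rho> \<le> f us v" "\<forall>u\<in>U. f u vs \<le> \<rho>"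
  shows "(SUP u\<in>U. f u vs) = \<rho>"
proof -
  have "f us vs = \<rho>"
    using assms by (meson order.antisym)
  then show ?thesis
    using assms by (intro cSup_eq_maximum) auto
qed

lemma saddle_SUP_INF_eq:
  fixes f :: "'a \<Rightarrow> 'b \<Rightarrow> real"
  assumes "us \<in> U" "vs \<in> V" "\<forall>v\<in>V. \<rho> \<le> f us v" "\<forall>u\<in>U. f u vs \<le> \<rho>"
    and "\<And>u. u \<in> U \<Longrightarrow> bdd_below (f u ` V)"
  shows "(SUP u\<in>U. INF v\<in>V. f u v) = \<rho>"
proof (rule cSup_eq_maximum)
  show "\<rho> \<in> (\<lambda>u. INF v\<in>V. f u v) ` U"
    using saddle_INF_eq[OF assms(1-4)] \<open>us \<in> U\<close> by force
next
  fix x assume "x \<in> (\<lambda>u. INF v\<in>V. f u v) ` U"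
  then obtain u where "u \<in> U" "x = (INF v\<in>V. f u v)"
    by blast
  then show "x \<le> \<rho>"
    using cINF_lower[OF assms(5)[OF \<open>u \<in> U\<close>] \<open>vs \<in> V\<close>] assms(4) by fastforce
qed

lemma saddle_INF_SUP_eq:
  fixes f :: "'a \<Rightarrow> 'b \<Rightarrow> real"
  assumes "us \<in> U" "vs \<in> V" "\<forall>v\<in>V. \<rho> \<le> f us v" "\<forall>u\<in>U. f u vs \<le> \<rho>"
    and "\<And>v. v \<in> V \<Longrightarrow> bdd_above ((\<lambda>u. f u v) ` U)"
  shows "(INF v\<in>V. SUP u\<in>U. f u v) = \<rho>"
proof (rule cInf_eq_minimum)
  show "\<rho> \<in> (\<lambda>v. SUP u\<in>U. f u v) ` V"
    using saddle_SUP_eq[OF assms(1-4)] \<open>vs \<in> V\<close> by force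
next
  fix x assume "x \<in> (\<lambda>v. SUP u\<in>U. f u v) ` V"
  then obtain v where "v \<in> V" "x = (SUP u\<in>U. f u v)"
    by blast
  then show "\<rho> \<le> x"
    using cSUP_upper[OF \<open>us \<in> U\<close> assms(5)[OF \<open>v \<in> V\<close>]] assms(3) by fastforce
qed

lemma continuous_attains_INF:
  fixes f :: "'a::topological_space \<Rightarrow> real"
  assumes "compact S" "S \<noteq> {}" "continuous_on S f"
  shows "\<exists>x\<in>S. f x = (INF y\<in>S. f y)"
proof -
  obtain x where "x \<in> S" "\<forall>y\<in>S. f x \<le> f y"
    using continuous_attains_inf[OF assms] by blast
  then show ?thesis
    by (intro bexI[of _ x] cInf_eq_minimum[symmetric]) auto
qed

lemma continuous_attains_SUP:
  fixes f :: "'a::topological_space \<Rightarrow> real"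
  assumes "compact S" "S \<noteq> {}" "continuous_on S f"
  shows "\<exists>x\<in>S. f x = (SUP y\<in>S. f y)"
proof -
  obtain x where "x \<in> S" "\<forall>y\<in>S. f y \<le> f x"
    using continuous_attains_sup[OF assms] by blast
  then show ?thesis
    by (intro bexI[of _ x] cSup_eq_maximum[symmetric]) auto
qed

definition conj_transpose :: "complex ^ 'm ^ 'n \<Rightarrow> complex ^ 'n ^ 'm" where
  "conj_transpose A = (\<chi> j i. cnj (A $ i $ j))"

lemma inner_complex_vec: "inner u w = Re (\<Sum>i\<in>UNIV. cnj (u $ i) * w $ i)"
  by (simp add: inner_vec_def inner_complex_def)

lemma Re_bilin_eq_inner: "Re (bilin A u v) = inner u (A *v v)"
  by (simp add: inner_complex_vec bilin_def matrix_vector_mult_def sum_distrib_left mult.assoc)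

lemma Re_bilin_eq_inner_conj_transpose: "Re (bilin A u v) = inner (conj_transpose A *v u) v"
proof -
  have "bilin A u v = (\<Sum>j\<in>UNIV. \<Sum>i\<in>UNIV. cnj (u $ i) * A $ i $ j * v $ j)"
    unfolding bilin_def by (rule sum.swap)
  then show ?thesis
    by (simp add: inner_complex_vec conj_transpose_def matrix_vector_mult_def
        sum_distrib_left sum_distrib_right mult_ac)
qed

lemma cset_eq:
  "cset a = cball 0 a \<inter> (\<Inter>i. {u. 0 \<le> Re (u $ i)}) \<inter> {u. (\<Sum>i\<in>UNIV. u $ i) = 1}"
  by (auto simp: cset_def)

lemma compact_cset: "compact (cset a :: (complex ^ 'n::finite) set)"
  unfolding cset_eq
proof (rule compact_Int_closed)
  show "compact (cball 0 a \<inter> (\<Inter>i. {u::complex ^ 'n. 0 \<le> Re (u $ i)}))"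
    by (intro compact_Int_closed compact_cball closed_INT ballI closed_Collect_le continuous_intros)
  show "closed {u::complex ^ 'n. (\<Sum>i\<in>UNIV. u $ i) = 1}"
    by (intro closed_Collect_eq continuous_intros)
qed

lemma convex_cset: "convex (cset a :: (complex ^ 'n::finite) set)"
  unfolding cset_eq
  by (intro convex_Int convex_INT convex_cball)
     (auto simp: convex_def sum.distrib scaleR_sum_right[symmetric] scaleR_add_left[symmetric])

lemma uniform_vector_in_cset:
  assumes "a \<ge> 1 / sqrt (real CARD('n::finite))"
  shows "(\<chi> i. complex_of_real (1 / real CARD('n))) \<in> (cset a :: (complex ^ 'n) set)"
proof -
  let ?c = "real CARD('n)"
  have "norm (\<chi> i::'n. complex_of_real (1 / ?c)) = sqrt (?c * (1 / ?c)\<^sup>2)"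
    by (simp add: norm_vec_def L2_set_def norm_divide)
  also have "\<dots> = 1 / sqrt ?c"
    by (simp add: power2_eq_square real_sqrt_divide)
  finally show ?thesis
    using assms by (simp add: cset_def)
qed

theorem theorem3:
  fixes A :: "complex ^ 'm::finite ^ 'n::finite" and \<alpha>1 \<alpha>2 :: real
  defines "U \<equiv> (cset \<alpha>1 :: (complex ^ 'n) set)"
      and "V \<equiv> (cset \<alpha>2 :: (complex ^ 'm) set)"
  assumes "\<alpha>1 \<ge> 1 / sqrt (real CARD('n))"
      and "\<alpha>2 \<ge> 1 / sqrt (real CARD('m))"
  shows "\<exists>us\<in>U. \<exists>vs\<in>V. \<exists>\<rho>::real.
           (\<forall>v\<in>V. Re (bilin A us v) \<ge> \<rho>) \<and> (\<forall>u\<in>U. Re (bilin A u vs) \<le> \<rho>)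
         \<and> (\<forall>us'\<in>U. \<forall>vs'\<in>V. \<forall>\<rho>'::real.
              (\<forall>v\<in>V. Re (bilin A us' v) \<ge> \<rho>') \<and> (\<forall>u\<in>U. Re (bilin A u vs') \<le> \<rho>')
              \<longrightarrow> \<rho>' = \<rho>)
         \<and> (\<forall>u\<in>U. \<exists>v0\<in>V. Re (bilin A u v0) = (INF v\<in>V. Re (bilin A u v)))
         \<and> (\<exists>u0\<in>U. (INF v\<in>V. Re (bilin A u0 v)) = (SUP u\<in>U. INF v\<in>V. Re (bilin A u v)))
         \<and> (\<forall>v\<in>V. \<exists>u0\<in>U. Re (bilin A u0 v) = (SUP u\<in>U. Re (bilin A u v)))
         \<and> (\<exists>v0\<in>V. (SUP u\<in>U. Re (bilin A u v0)) = (INF v\<in>V. SUP u\<in>U. Re (bilin A u v)))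
         \<and> \<rho> = (SUP u\<in>U. INF v\<in>V. Re (bilin A u v))
         \<and> \<rho> = (INF v\<in>V. SUP u\<in>U. Re (bilin A u v))"
proof -
  define f where "f u v = Re (bilin A u v)" for u v
  have U: "compact U" "convex U" "U \<noteq> {}"
    unfolding U_def using compact_cset convex_cset uniform_vector_in_cset[OF assms(3)] by blast+
  have V: "compact V" "convex V" "V \<noteq> {}"
    unfolding V_def using compact_cset convex_cset uniform_vector_in_cset[OF assms(4)] by blast+
  have cont: "continuous_on S (f u)" "continuous_on T (\<lambda>u. f u v)" for S T u v
    unfolding f_def Re_bilin_eq_inner by (intro continuous_intros)+
  obtain us vs where "us \<in> U" "vs \<in> V" "\<forall>v\<in>V. f us vs \<le> f us v" "\<forall>u\<in>U. f u vs \<le> f us vs"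
    by (rule bilinear_saddle_point_exists[OF U V, of "(*v) A" "(*v) (conj_transpose A)" f])
       (auto simp: f_def Re_bilin_eq_inner[symmetric] Re_bilin_eq_inner_conj_transpose[symmetric]
         intro: continuous_intros)
  then obtain \<rho> where saddle: "us \<in> U" "vs \<in> V" "\<forall>v\<in>V. \<rho> \<le> f us v" "\<forall>u\<in>U. f u vs \<le> \<rho>"
    by blast
  have bdd: "bdd_below (f u ` V)" "bdd_above ((\<lambda>u. f u v) ` U)" for u v
    using compact_continuous_image[OF cont(1) V(1)] compact_continuous_image[OF cont(2) U(1)]
    by (simp_all add: bounded_imp_bdd_below bounded_imp_bdd_above compact_imp_bounded)
  have "\<forall>u\<in>U. \<exists>v0\<in>V. f u v0 = (INF v\<in>V. f u v)"
    using continuous_attains_INF[OF V(1,3) cont(1)] by blast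
  moreover have "\<forall>v\<in>V. \<exists>u0\<in>U. f u0 v = (SUP u\<in>U. f u v)"
    using continuous_attains_SUP[OF U(1,3) cont(2)] by blast
  moreover have "\<rho> = (SUP u\<in>U. INF v\<in>V. f u v)" "\<rho> = (INF v\<in>V. SUP u\<in>U. f u v)"
    using saddle_SUP_INF_eq[OF saddle bdd(1)] saddle_INF_SUP_eq[OF saddle bdd(2)] by simp_all
  moreover have "(INF v\<in>V. f us v) = (SUP u\<in>U. INF v\<in>V. f u v)"
    "(SUP u\<in>U. f u vs) = (INF v\<in>V. SUP u\<in>U. f u v)"
    using saddle_INF_eq[OF saddle] saddle_SUP_eq[OF saddle] calculation(3,4) by simp_all
  moreover have "\<forall>us'\<in>U. \<forall>vs'\<in>V. \<forall>\<rho>'.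
      (\<forall>v\<in>V. \<rho>' \<le> f us' v) \<and> (\<forall>u\<in>U. f u vs' \<le> \<rho>') \<longrightarrow> \<rho>' = \<rho>"
    using saddle_value_unique[OF saddle] by blast
  ultimately show ?thesis
    unfolding f_def[symmetric] using saddle by blast
qed

end
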